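(* Let $G=\bigl((f_j)_{j=1}^n;(R^i)_{i=1}^k;(f^i_j)_{i\in[k],\,j\in R^i}\bigr)$ be a resource selection game with I.D.-dependent weighting. If all functions $f_j$ ($j\in[n]$) and $f^i_j$ ($i\in[k]$, $j\in R^i$) are continuous, then a strong Nash equilibrium exists in $G$.
   Context: For $n,k\in\mathbb{N}$, an $n$-resource/$k$-player-type resource selection game with I.D.-dependent weighting is a triple $\bigl((f_j)_{j=1}^n;(R^i)_{i=1}^k;(f^i_j)_{i\in[k],j\in R^i}\bigr)$ where each $f_j:[0,\infty)\to\mathbb{R}$ is nondecreasing, each $R^i$ is a nonempty subset of $[n]$, and each $f^i_j:[0,1]\to[0,\infty)$ is increasing. A consumption profile is a map $s:[k]\to[0,\infty)^{[n]}$ with $s_j(i)=0$ for $j\notin R^i$ and $\sum_j s_j(i)=1$ (the fraction of type-$i$ players using resource $j$). The weighted load of resource $j$ is $\mu^s_j=\sum_{i:\,j\in R^i}f^i_j(s_j(i))$ and its cost is $h^s_j=f_j(\mu^s_j)$. $s$ is a Nash equilibrium if for every $i\in[k]$, every $\ell$ with $s_\ell(i)>0$ and every $j\in R^i$, $h^s_\ell\le h^s_j$. For a Nash equilibrium $s$ and $i\in[k]$, let $h^i=h^s_\ell$ for any $\ell$ with $s_\ell(i)>0$. A Nash equilibrium $s$ is strong if there is no consumption profile $s'\ne s$ such that for every $i\in[k]$ and every $\ell$ with $s'_\ell(i)>s_\ell(i)$, $h^{s'}_\ell<h^i$. *)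

theory Defs
  imports "HOL-Analysis.Analysis"
begin

text \<open>Resources are indexed by [n] = {1..n}, player types by [k] = {1..k}.
  f j : cost function of resource j;  R i : the set of resources available to type i;
  w i j : the weighting function f^i_j.  A consumption profile is s :: nat => nat => real,
  where s i j is the fraction s_j(i) of type-i players using resource j; it is required
  to vanish outside [k] x [n] so that equality of profiles is equality of maps on [k].\<close>

definition rsg_game :: "nat \<Rightarrow> nat \<Rightarrow> (nat \<Rightarrow> real \<Rightarrow> real) \<Rightarrow> (nat \<Rightarrow> nat set)
    \<Rightarrow> (nat \<Rightarrow> nat \<Rightarrow> real \<Rightarrow> real) \<Rightarrow> bool" where
  "rsg_game n k f R w \<longleftrightarrow>
     (\<forall>j\<in>{1..n}. mono_on {0..} (f j)) \<and>
     (\<forall>i\<in>{1..k}. R i \<noteq> {} \<and> R i \<subseteq> {1..n}) \<and>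
     (\<forall>i\<in>{1..k}. \<forall>j\<in>R i. strict_mono_on {0..1} (w i j) \<and> (\<forall>x\<in>{0..1}. w i j x \<ge> 0))"

definition consumption_profile :: "nat \<Rightarrow> nat \<Rightarrow> (nat \<Rightarrow> nat set) \<Rightarrow> (nat \<Rightarrow> nat \<Rightarrow> real) \<Rightarrow> bool" where
  "consumption_profile n k R s \<longleftrightarrow>
     (\<forall>i j. s i j \<noteq> 0 \<longrightarrow> i \<in> {1..k} \<and> j \<in> {1..n}) \<and>
     (\<forall>i\<in>{1..k}. (\<forall>j\<in>{1..n}. s i j \<ge> 0 \<and> (j \<notin> R i \<longrightarrow> s i j = 0))
                  \<and> (\<Sum>j\<in>{1..n}. s i j) = 1)"

definition load :: "nat \<Rightarrow> (nat \<Rightarrow> nat set) \<Rightarrow> (nat \<Rightarrow> nat \<Rightarrow> real \<Rightarrow> real)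
    \<Rightarrow> (nat \<Rightarrow> nat \<Rightarrow> real) \<Rightarrow> nat \<Rightarrow> real" where
  "load k R w s j = (\<Sum>i\<in>{i\<in>{1..k}. j \<in> R i}. w i j (s i j))"

definition cost :: "nat \<Rightarrow> (nat \<Rightarrow> real \<Rightarrow> real) \<Rightarrow> (nat \<Rightarrow> nat set) \<Rightarrow> (nat \<Rightarrow> nat \<Rightarrow> real \<Rightarrow> real)
    \<Rightarrow> (nat \<Rightarrow> nat \<Rightarrow> real) \<Rightarrow> nat \<Rightarrow> real" where
  "cost k f R w s j = f j (load k R w s j)"

definition nash_eq :: "nat \<Rightarrow> nat \<Rightarrow> (nat \<Rightarrow> real \<Rightarrow> real) \<Rightarrow> (nat \<Rightarrow> nat set)
    \<Rightarrow> (nat \<Rightarrow> nat \<Rightarrow> real \<Rightarrow> real) \<Rightarrow> (nat \<Rightarrow> nat \<Rightarrow> real) \<Rightarrow> bool" where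
  "nash_eq n k f R w s \<longleftrightarrow> consumption_profile n k R s \<and>
     (\<forall>i\<in>{1..k}. \<forall>l\<in>{1..n}. s i l > 0 \<longrightarrow> (\<forall>j\<in>R i. cost k f R w s l \<le> cost k f R w s j))"

text \<open>h^i: the cost of (any) resource used by type i.\<close>
definition type_cost :: "nat \<Rightarrow> nat \<Rightarrow> (nat \<Rightarrow> real \<Rightarrow> real) \<Rightarrow> (nat \<Rightarrow> nat set)
    \<Rightarrow> (nat \<Rightarrow> nat \<Rightarrow> real \<Rightarrow> real) \<Rightarrow> (nat \<Rightarrow> nat \<Rightarrow> real) \<Rightarrow> nat \<Rightarrow> real" where
  "type_cost n k f R w s i = cost k f R w s (SOME l. l \<in> {1..n} \<and> s i l > 0)"

definition strong_nash_eq :: "nat \<Rightarrow> nat \<Rightarrow> (nat \<Rightarrow> real \<Rightarrow> real) \<Rightarrow> (nat \<Rightarrow> nat set)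
    \<Rightarrow> (nat \<Rightarrow> nat \<Rightarrow> real \<Rightarrow> real) \<Rightarrow> (nat \<Rightarrow> nat \<Rightarrow> real) \<Rightarrow> bool" where
  "strong_nash_eq n k f R w s \<longleftrightarrow> nash_eq n k f R w s \<and>
     \<not> (\<exists>s'. consumption_profile n k R s' \<and> s' \<noteq> s \<and>
           (\<forall>i\<in>{1..k}. \<forall>l\<in>{1..n}. s' i l > s i l \<longrightarrow>
               cost k f R w s' l < type_cost n k f R w s i))"

end

theory Submission
  imports Defs
begin

text \<open>Compare profiles by their cost vectors sorted decreasingly, lexicographically.
  The set of profiles is compact and the q-th largest cost is a continuous function of the
  profile, so minimising the 1st, 2nd, ..., n-th largest cost in turn yields a nonempty set
  of lexicographic minimisers (lex_min). A profitable coalitional deviation from a Nash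
  equilibrium makes every cost weakly and some cost strictly smaller, which is impossible at
  a lexicographic minimiser; hence a minimiser that is a Nash equilibrium is strong
  (lex_min_nash_strong). For strictly increasing cost functions every minimiser is a Nash
  equilibrium, since moving a little mass to a cheaper resource would lower the sorted cost
  vector (lex_min_nash). For merely nondecreasing costs we perturb f_j(x) to f_j(x) + e x,
  take strong equilibria for e = 1/(m+1) and pass to a convergent subsequence; the limit is
  again a strong equilibrium (limit_nash, limit_strong), which gives strong_nash_exists and
  the main theorem.

  Profiles are handled as points of the product space nat => nat => real; loads are computed
  with shares clamped to [0,1] so that costs are continuous on the whole space.\<close>

lemma continuous_on_entry:
  "continuous_on UNIV (\<lambda>s::nat \<Rightarrow> nat \<Rightarrow> real. s i j)"
  by (rule continuous_on_product_then_coordinatewise) simp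

lemma compact_unit_box:
  "compact {s::nat \<Rightarrow> nat \<Rightarrow> real. \<forall>i j. s i j \<in> {0..1}}"
proof -
  have row: "compact (PiE UNIV (\<lambda>j::nat. {0..1::real}))"
    using compactin_PiE[of "\<lambda>j::nat. euclidean" UNIV "\<lambda>j. {0..1::real}"]
    by (simp add: euclidean_product_topology)
  have "compact (PiE UNIV (\<lambda>i::nat. PiE UNIV (\<lambda>j::nat. {0..1::real})))"
    using compactin_PiE[of "\<lambda>i::nat. euclidean" UNIV "\<lambda>i. PiE UNIV (\<lambda>j::nat. {0..1::real})"] row
    by (simp add: euclidean_product_topology)
  moreover have "PiE UNIV (\<lambda>i::nat. PiE UNIV (\<lambda>j::nat. {0..1::real}))
                 = {s. \<forall>i j. s i j \<in> {0..1}}"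
    by (auto simp: PiE_iff)
  ultimately show ?thesis by simp
qed

lemma tendsto_continuous_UNIV:
  "continuous_on UNIV g \<Longrightarrow> (X \<longlongrightarrow> a) F \<Longrightarrow> ((\<lambda>m. g (X m)) \<longlongrightarrow> g a) F"
  using continuous_on_tendsto_compose[of UNIV g X a F] by simp

lemma continuous_on_Max_image:
  fixes g :: "'i \<Rightarrow> 'a::topological_space \<Rightarrow> real"
  assumes "finite I" "I \<noteq> {}" "\<And>i. i \<in> I \<Longrightarrow> continuous_on A (g i)"
  shows "continuous_on A (\<lambda>x. Max ((\<lambda>i. g i x) ` I))"
  using assms
proof (induction I rule: finite_ne_induct)
  case (insert a F)
  then have "(\<lambda>x. Max ((\<lambda>i. g i x) ` insert a F)) = (\<lambda>x. max (g a x) (Max ((\<lambda>i. g i x) ` F)))"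
    by auto
  then show ?case using insert by (auto intro!: continuous_intros)
qed simp

lemma continuous_on_Min_image:
  fixes g :: "'i \<Rightarrow> 'a::topological_space \<Rightarrow> real"
  assumes "finite I" "I \<noteq> {}" "\<And>i. i \<in> I \<Longrightarrow> continuous_on A (g i)"
  shows "continuous_on A (\<lambda>x. Min ((\<lambda>i. g i x) ` I))"
  using assms
proof (induction I rule: finite_ne_induct)
  case (insert a F)
  then have "(\<lambda>x. Min ((\<lambda>i. g i x) ` insert a F)) = (\<lambda>x. min (g a x) (Min ((\<lambda>i. g i x) ` F)))"
    by auto
  then show ?case using insert by (auto intro!: continuous_intros)
qed simp

definition unit_clamp :: "real \<Rightarrow> real" where
  "unit_clamp x = min 1 (max 0 x)"

lemma continuous_on_unit_clamp: "continuous_on UNIV unit_clamp"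
  unfolding unit_clamp_def by (intro continuous_intros)

lemma unit_clamp_in_unit: "unit_clamp x \<in> {0..1}"
  unfolding unit_clamp_def by auto

lemma unit_clamp_id: "x \<in> {0..1} \<Longrightarrow> unit_clamp x = x"
  unfolding unit_clamp_def by auto

text \<open>Order statistics of a vector x on [n]: the number of entries at least v, and the q-th
  largest entry (the largest value that is attained or exceeded by q entries).\<close>
definition count_at_least :: "nat \<Rightarrow> (nat \<Rightarrow> real) \<Rightarrow> real \<Rightarrow> nat" where
  "count_at_least n x v = card {j\<in>{1..n}. v \<le> x j}"

definition qth_largest :: "nat \<Rightarrow> nat \<Rightarrow> (nat \<Rightarrow> real) \<Rightarrow> real" where
  "qth_largest n q x = Max ((\<lambda>S. Min (x ` S)) ` {S. S \<subseteq> {1..n} \<and> card S = q})"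

lemma finite_subsets_card: "finite {S. S \<subseteq> {1..n::nat} \<and> card S = q}"
  by (rule finite_subset[of _ "Pow {1..n}"]) auto

lemma subsets_card_nonempty: "q \<le> n \<Longrightarrow> {S. S \<subseteq> {1..n::nat} \<and> card S = q} \<noteq> {}"
  using obtain_subset_with_card_n[of q "{1..n}"] by auto

lemma count_at_least_le: "count_at_least n x v \<le> n"
proof -
  have "card {j\<in>{1..n}. v \<le> x j} \<le> card {1..n}" by (rule card_mono) auto
  then show ?thesis unfolding count_at_least_def by simp
qed

lemma count_at_least_mono:
  "(\<And>j. j \<in> {1..n} \<Longrightarrow> v \<le> y j \<Longrightarrow> v \<le> x j) \<Longrightarrow> count_at_least n y v \<le> count_at_least n x v"
  unfolding count_at_least_def by (intro card_mono) auto

lemma count_at_least_strict_mono: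
  assumes "\<And>j. j \<in> {1..n} \<Longrightarrow> v \<le> y j \<Longrightarrow> v \<le> x j"
    and "l \<in> {1..n}" "v \<le> x l" "y l < v"
  shows "count_at_least n y v < count_at_least n x v"
  unfolding count_at_least_def
  by (rule psubset_card_mono) (use assms in \<open>auto simp: not_le[symmetric]\<close>)

lemma qth_largest_ge:
  assumes "1 \<le> q" "q \<le> count_at_least n x v"
  shows "v \<le> qth_largest n q x"
proof -
  obtain T where T: "T \<subseteq> {j\<in>{1..n}. v \<le> x j}" "card T = q"
    using obtain_subset_with_card_n[of q "{j\<in>{1..n}. v \<le> x j}"] assms(2)
    unfolding count_at_least_def by auto
  have "finite T" "T \<noteq> {}"
    using T assms(1) finite_subset[OF T(1)] by auto
  then have "v \<le> Min (x ` T)" using T(1) by auto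
  also have "Min (x ` T) \<le> qth_largest n q x"
  proof -
    have "T \<in> {S. S \<subseteq> {1..n} \<and> card S = q}" using T by auto
    then show ?thesis unfolding qth_largest_def using finite_subsets_card by (intro Max_ge) auto
  qed
  finally show ?thesis .
qed

lemma qth_largest_less:
  assumes "q \<le> n" "count_at_least n x v < q"
  shows "qth_largest n q x < v"
proof -
  have "Min (x ` S) < v" if S: "S \<subseteq> {1..n}" "card S = q" for S
  proof -
    have "\<not> S \<subseteq> {j\<in>{1..n}. v \<le> x j}"
      using card_mono[of "{j\<in>{1..n}. v \<le> x j}" S] S assms(2)
      unfolding count_at_least_def by auto
    then obtain j where "j \<in> S" "x j < v" using S(1) by force
    moreover have "finite S" using S(1) finite_subset by blast
    ultimately have "Min (x ` S) \<le> x j" by (intro Min_le) auto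
    then show ?thesis using \<open>x j < v\<close> by simp
  qed
  then show ?thesis
    unfolding qth_largest_def using finite_subsets_card subsets_card_nonempty[OF assms(1)]
    by (subst Max_less_iff) auto
qed

lemma qth_largest_mono:
  assumes "1 \<le> q" "q \<le> n" "v \<le> qth_largest n q y"
    and "\<And>u. v \<le> u \<Longrightarrow> count_at_least n y u \<le> count_at_least n x u"
  shows "qth_largest n q y \<le> qth_largest n q x"
proof -
  have "\<not> count_at_least n y (qth_largest n q y) < q"
    using qth_largest_less[OF assms(2)] by auto
  then have "q \<le> count_at_least n x (qth_largest n q y)"
    using assms(3,4) by (meson le_trans not_le)
  then show ?thesis using qth_largest_ge[OF assms(1)] by blast
qed

lemma continuous_on_qth_largest:
  fixes g :: "'a::topological_space \<Rightarrow> nat \<Rightarrow> real"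
  assumes "1 \<le> q" "q \<le> n" "\<And>j. j \<in> {1..n} \<Longrightarrow> continuous_on UNIV (\<lambda>s. g s j)"
  shows "continuous_on UNIV (\<lambda>s. qth_largest n q (g s))"
  unfolding qth_largest_def
proof (rule continuous_on_Max_image[OF finite_subsets_card subsets_card_nonempty[OF assms(2)]])
  fix S assume "S \<in> {S. S \<subseteq> {1..n} \<and> card S = q}"
  then have S: "S \<subseteq> {1..n}" "finite S" "S \<noteq> {}"
    using assms(1) finite_subset by fastforce+
  show "continuous_on UNIV (\<lambda>s. Min (g s ` S))"
    using continuous_on_Min_image[OF S(2,3), where g="\<lambda>j s. g s j" and A=UNIV] assms(3) S(1) by blast
qed

text \<open>The cost functions f are kept as a parameter
  of the individual definitions and lemmas, because they are perturbed in the final step.\<close>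
locale weighted_game =
  fixes n k :: nat and R :: "nat \<Rightarrow> nat set" and w :: "nat \<Rightarrow> nat \<Rightarrow> real \<Rightarrow> real"
  assumes R_ok: "\<And>i. i \<in> {1..k} \<Longrightarrow> R i \<noteq> {} \<and> R i \<subseteq> {1..n}"
    and w_strict_mono: "\<And>i j. i \<in> {1..k} \<Longrightarrow> j \<in> R i \<Longrightarrow> strict_mono_on {0..1} (w i j)"
    and w_nonneg: "\<And>i j x. i \<in> {1..k} \<Longrightarrow> j \<in> R i \<Longrightarrow> x \<in> {0..1} \<Longrightarrow> 0 \<le> w i j x"
    and w_cont: "\<And>i j. i \<in> {1..k} \<Longrightarrow> j \<in> R i \<Longrightarrow> continuous_on {0..1} (w i j)"
begin

definition profiles :: "(nat \<Rightarrow> nat \<Rightarrow> real) set" where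
  "profiles = {s. consumption_profile n k R s}"

lemma R_sub: "i \<in> {1..k} \<Longrightarrow> j \<in> R i \<Longrightarrow> j \<in> {1..n}"
  using R_ok by blast

lemma profiles_iff:
  "s \<in> profiles \<longleftrightarrow> (\<forall>a b. s a b \<noteq> 0 \<longrightarrow> a \<in> {1..k} \<and> b \<in> R a) \<and> (\<forall>a b. 0 \<le> s a b)
      \<and> (\<forall>a\<in>{1..k}. (\<Sum>b\<in>{1..n}. s a b) = 1)"
proof
  assume s: "s \<in> profiles"
  then have cp: "consumption_profile n k R s" unfolding profiles_def by simp
  have supp: "a \<in> {1..k} \<and> b \<in> R a" if "s a b \<noteq> 0" for a b
    using cp that unfolding consumption_profile_def by blast
  moreover have "0 \<le> s a b" for a b
    using cp supp[of a b] R_sub unfolding consumption_profile_def by fastforce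
  ultimately show "(\<forall>a b. s a b \<noteq> 0 \<longrightarrow> a \<in> {1..k} \<and> b \<in> R a) \<and> (\<forall>a b. 0 \<le> s a b)
      \<and> (\<forall>a\<in>{1..k}. (\<Sum>b\<in>{1..n}. s a b) = 1)"
    using cp unfolding consumption_profile_def by blast
next
  assume "(\<forall>a b. s a b \<noteq> 0 \<longrightarrow> a \<in> {1..k} \<and> b \<in> R a) \<and> (\<forall>a b. 0 \<le> s a b)
      \<and> (\<forall>a\<in>{1..k}. (\<Sum>b\<in>{1..n}. s a b) = 1)"
  then show "s \<in> profiles"
    unfolding profiles_def consumption_profile_def using R_sub by blast
qed

lemma profile_support: "s \<in> profiles \<Longrightarrow> s a b \<noteq> 0 \<Longrightarrow> a \<in> {1..k} \<and> b \<in> R a"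
  unfolding profiles_iff by blast

lemma profile_index: "s \<in> profiles \<Longrightarrow> s a b \<noteq> 0 \<Longrightarrow> a \<in> {1..k} \<and> b \<in> {1..n}"
  using profile_support R_sub by blast

lemma profile_nonneg: "s \<in> profiles \<Longrightarrow> 0 \<le> s a b"
  unfolding profiles_iff by blast

lemma profile_sum: "s \<in> profiles \<Longrightarrow> a \<in> {1..k} \<Longrightarrow> (\<Sum>b\<in>{1..n}. s a b) = 1"
  unfolding profiles_iff by blast

lemma profile_le_1:
  assumes "s \<in> profiles" shows "s a b \<le> 1"
proof (cases "s a b = 0")
  case False
  then have ab: "a \<in> {1..k}" "b \<in> {1..n}" using profile_index[OF assms] by auto
  have "s a b \<le> (\<Sum>b\<in>{1..n}. s a b)"
    by (rule member_le_sum) (use ab profile_nonneg[OF assms] in auto)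
  then show ?thesis using profile_sum[OF assms ab(1)] by simp
qed simp

lemma profile_in_unit: "s \<in> profiles \<Longrightarrow> s a b \<in> {0..1}"
  using profile_nonneg profile_le_1 by auto

lemma profile_used_resource:
  assumes "s \<in> profiles" "a \<in> {1..k}" shows "\<exists>l\<in>{1..n}. 0 < s a l"
proof (rule ccontr)
  assume "\<not> ?thesis"
  then have "(\<Sum>l\<in>{1..n}. s a l) \<le> 0" by (intro sum_nonpos) (auto simp: not_less)
  then show False using profile_sum[OF assms] by simp
qed

lemma profiles_closed: "closed profiles"
proof -
  have "closed {s::nat \<Rightarrow> nat \<Rightarrow> real. \<forall>a b. s a b \<noteq> 0 \<longrightarrow> a \<in> {1..k} \<and> b \<in> R a}"
    by (intro closed_Collect_all closed_Collect_imp open_Collect_neq closed_Collect_const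
        continuous_on_entry continuous_on_const)
  moreover have "closed {s::nat \<Rightarrow> nat \<Rightarrow> real. \<forall>a b. 0 \<le> s a b}"
    by (intro closed_Collect_all closed_Collect_le continuous_on_entry continuous_on_const)
  moreover have "closed {s::nat \<Rightarrow> nat \<Rightarrow> real. \<forall>a. a \<in> {1..k} \<longrightarrow> (\<Sum>b\<in>{1..n}. s a b) = 1}"
    by (intro closed_Collect_all closed_Collect_imp open_Collect_const closed_Collect_eq
        continuous_on_sum continuous_on_entry continuous_on_const)
  ultimately have "closed {s::nat \<Rightarrow> nat \<Rightarrow> real. (\<forall>a b. s a b \<noteq> 0 \<longrightarrow> a \<in> {1..k} \<and> b \<in> R a)
      \<and> (\<forall>a b. 0 \<le> s a b) \<and> (\<forall>a\<in>{1..k}. (\<Sum>b\<in>{1..n}. s a b) = 1)}"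
    unfolding Ball_def by (intro closed_Collect_conj) assumption+
  moreover have "profiles = {s. (\<forall>a b. s a b \<noteq> 0 \<longrightarrow> a \<in> {1..k} \<and> b \<in> R a)
      \<and> (\<forall>a b. 0 \<le> s a b) \<and> (\<forall>a\<in>{1..k}. (\<Sum>b\<in>{1..n}. s a b) = 1)}"
    by (rule set_eqI) (simp only: profiles_iff mem_Collect_eq)
  ultimately show ?thesis by simp
qed

lemma profiles_compact: "compact profiles"
proof -
  have "profiles = {s. \<forall>i j. s i j \<in> {0..1}} \<inter> profiles"
    using profile_in_unit by auto
  then show ?thesis using compact_Int_closed[OF compact_unit_box profiles_closed] by simp
qed

lemma profiles_nonempty: "profiles \<noteq> {}"
proof -
  define s where "s a b = (if a \<in> {1..k} \<and> b = (LEAST j. j \<in> R a) then 1 else 0::real)" for a b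
  have least: "(LEAST j. j \<in> R a) \<in> R a" if "a \<in> {1..k}" for a
    using R_ok[OF that] by (meson LeastI ex_in_conv)
  have "a \<in> {1..k} \<and> b \<in> R a" if "s a b \<noteq> 0" for a b
    using that least unfolding s_def by (auto split: if_splits)
  moreover have "0 \<le> s a b" for a b
    unfolding s_def by simp
  moreover have "(\<Sum>b\<in>{1..n}. s a b) = 1" if "a \<in> {1..k}" for a
    using R_sub[OF that least[OF that]] that unfolding s_def by (simp add: sum.delta')
  ultimately have "s \<in> profiles"
    unfolding profiles_iff by blast
  then show ?thesis by auto
qed

lemma profile_add_direction:
  assumes "x \<in> profiles"
    and "\<And>a b. D a b \<noteq> 0 \<Longrightarrow> a \<in> {1..k} \<and> b \<in> R a"
    and "\<And>a. a \<in> {1..k} \<Longrightarrow> (\<Sum>b\<in>{1..n}. D a b) = 0"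
    and "\<And>a b. 0 \<le> x a b + D a b"
  shows "(\<lambda>a b. x a b + D a b) \<in> profiles"
proof -
  have "a \<in> {1..k} \<and> b \<in> R a" if "x a b + D a b \<noteq> 0" for a b
    using that assms(2) profile_support[OF assms(1)] by (cases "D a b = 0") auto
  moreover have "(\<Sum>b\<in>{1..n}. x a b + D a b) = 1" if "a \<in> {1..k}" for a
    using that profile_sum[OF assms(1)] assms(3) by (simp add: sum.distrib)
  ultimately show ?thesis
    unfolding profiles_iff using assms(4) by blast
qed

text \<open>The load of a resource, with the shares clamped to [0,1]; on profiles it is the load of
  the game, and the clamping makes it continuous on the whole space.\<close>
definition load_c :: "(nat \<Rightarrow> nat \<Rightarrow> real) \<Rightarrow> nat \<Rightarrow> real" where
  "load_c s j = (\<Sum>i\<in>{i\<in>{1..k}. j \<in> R i}. w i j (unit_clamp (s i j)))"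

definition cost_c :: "(nat \<Rightarrow> real \<Rightarrow> real) \<Rightarrow> (nat \<Rightarrow> nat \<Rightarrow> real) \<Rightarrow> nat \<Rightarrow> real" where
  "cost_c f s j = f j (load_c s j)"

lemma load_c_eq: "s \<in> profiles \<Longrightarrow> load_c s j = load k R w s j"
  unfolding load_c_def load_def by (rule sum.cong) (auto simp: unit_clamp_id[OF profile_in_unit])

lemma cost_c_eq: "s \<in> profiles \<Longrightarrow> cost_c f s j = cost k f R w s j"
  unfolding cost_c_def cost_def using load_c_eq by simp

lemma load_c_nonneg: "0 \<le> load_c s j"
  unfolding load_c_def using w_nonneg unit_clamp_in_unit by (intro sum_nonneg) auto

lemma continuous_load_c: "continuous_on UNIV (\<lambda>s. load_c s j)"
  unfolding load_c_def
proof (intro continuous_on_sum)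
  fix i assume i: "i \<in> {i\<in>{1..k}. j \<in> R i}"
  have "continuous_on UNIV (\<lambda>s::nat \<Rightarrow> nat \<Rightarrow> real. unit_clamp (s i j))"
    using continuous_on_compose2[OF continuous_on_unit_clamp continuous_on_entry] by auto
  then show "continuous_on UNIV (\<lambda>s::nat \<Rightarrow> nat \<Rightarrow> real. w i j (unit_clamp (s i j)))"
    using continuous_on_compose2[of "{0..1}" "w i j"] w_cont i unit_clamp_in_unit by blast
qed

lemma continuous_cost_c:
  "continuous_on {0..} (f j) \<Longrightarrow> continuous_on UNIV (\<lambda>s. cost_c f s j)"
  unfolding cost_c_def
  using continuous_on_compose2[OF _ continuous_load_c, of "{0..}" "f j"] load_c_nonneg by auto

lemma w_mono_on_profiles:
  assumes "s \<in> profiles" "s' \<in> profiles" "a \<in> {1..k}" "b \<in> R a" "s' a b \<le> s a b"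
  shows "w a b (s' a b) \<le> w a b (s a b)"
proof (cases "s' a b = s a b")
  case False
  with assms(5) have "s' a b < s a b" by simp
  from strict_mono_onD[OF w_strict_mono[OF assms(3,4)] profile_in_unit[OF assms(2)]
      profile_in_unit[OF assms(1)] this]
  show ?thesis by simp
qed simp

lemma load_c_mono:
  assumes "s \<in> profiles" "s' \<in> profiles" "\<And>a. a \<in> {1..k} \<Longrightarrow> b \<in> R a \<Longrightarrow> s' a b \<le> s a b"
  shows "load_c s' b \<le> load_c s b"
  unfolding load_c_eq[OF assms(1)] load_c_eq[OF assms(2)] load_def
  using w_mono_on_profiles[OF assms(1,2)] assms(3) by (intro sum_mono) auto

lemma load_c_strict_mono:
  assumes "s \<in> profiles" "s' \<in> profiles" "\<And>a. a \<in> {1..k} \<Longrightarrow> b \<in> R a \<Longrightarrow> s' a b \<le> s a b"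
    and "i \<in> {1..k}" "b \<in> R i" "s' i b < s i b"
  shows "load_c s' b < load_c s b"
  unfolding load_c_eq[OF assms(1)] load_c_eq[OF assms(2)] load_def
proof (rule sum_strict_mono_ex1)
  show "\<forall>a\<in>{a \<in> {1..k}. b \<in> R a}. w a b (s' a b) \<le> w a b (s a b)"
    using w_mono_on_profiles[OF assms(1,2)] assms(3) by auto
  have "w i b (s' i b) < w i b (s i b)"
    by (rule strict_mono_onD[OF w_strict_mono[OF assms(4,5)] profile_in_unit[OF assms(2)]
          profile_in_unit[OF assms(1)] assms(6)])
  then show "\<exists>a\<in>{a \<in> {1..k}. b \<in> R a}. w a b (s' a b) < w a b (s a b)"
    using assms(4,5) by blast
qed simp

lemma profiles_differ_increase:
  assumes "s \<in> profiles" "s' \<in> profiles" "s' \<noteq> s"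
  shows "\<exists>a\<in>{1..k}. \<exists>b\<in>{1..n}. s a b < s' a b"
proof -
  obtain a b where ab: "s' a b \<noteq> s a b" using assms(3) by (meson ext)
  then have a: "a \<in> {1..k}" and b: "b \<in> {1..n}"
    using profile_index[OF assms(1), of a b] profile_index[OF assms(2), of a b] by force+
  show ?thesis
  proof (rule ccontr)
    assume "\<not> ?thesis"
    with a have le: "\<forall>b'\<in>{1..n}. s' a b' \<le> s a b'" by (meson not_le)
    with ab b have "s' a b < s a b" by (simp add: order_less_le)
    with le b have "(\<Sum>b'\<in>{1..n}. s' a b') < (\<Sum>b'\<in>{1..n}. s a b')"
      by (intro sum_strict_mono_ex1) auto
    then show False using profile_sum[OF assms(1) a] profile_sum[OF assms(2) a] by simp
  qed
qed

text \<open>The profiles whose cost vector, sorted decreasingly, is lexicographically minimal in its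
  first q entries: at stage q+1 the (q+1)-th largest cost is minimised over stage q.\<close>
fun lex_min :: "(nat \<Rightarrow> real \<Rightarrow> real) \<Rightarrow> nat \<Rightarrow> (nat \<Rightarrow> nat \<Rightarrow> real) set" where
  "lex_min f 0 = profiles"
| "lex_min f (Suc q) = {s \<in> lex_min f q. \<forall>t\<in>lex_min f q.
      qth_largest n (Suc q) (cost_c f s) \<le> qth_largest n (Suc q) (cost_c f t)}"

lemma lex_min_antimono: "q \<le> q' \<Longrightarrow> lex_min f q' \<subseteq> lex_min f q"
  by (induction q' rule: dec_induct) auto

lemma lex_min_profiles: "lex_min f q \<subseteq> profiles"
  using lex_min_antimono[of 0 q f] by simp

lemma lex_min_compact_nonempty:
  assumes f_cont: "\<And>j. j \<in> {1..n} \<Longrightarrow> continuous_on {0..} (f j)"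
  shows "q \<le> n \<Longrightarrow> compact (lex_min f q) \<and> lex_min f q \<noteq> {}"
proof (induction q)
  case 0
  then show ?case using profiles_compact profiles_nonempty by simp
next
  case (Suc q)
  define h where "h s = qth_largest n (Suc q) (cost_c f s)" for s
  have h_cont: "continuous_on UNIV h"
    unfolding h_def using Suc.prems f_cont continuous_cost_c by (intro continuous_on_qth_largest) auto
  have IH: "compact (lex_min f q)" "lex_min f q \<noteq> {}" using Suc by auto
  obtain s0 where s0: "s0 \<in> lex_min f q" "\<forall>t\<in>lex_min f q. h s0 \<le> h t"
    using continuous_attains_inf[OF IH continuous_on_subset[OF h_cont]] by blast
  have eq: "lex_min f (Suc q) = lex_min f q \<inter> {s. h s \<le> h s0}"
    using s0 unfolding h_def by (auto intro: order_trans)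
  have "closed {s. h s \<le> h s0}" by (rule closed_Collect_le[OF h_cont continuous_on_const])
  then have "compact (lex_min f (Suc q))" unfolding eq by (rule compact_Int_closed[OF IH(1)])
  moreover have "s0 \<in> lex_min f (Suc q)" unfolding eq using s0 by auto
  ultimately show ?case by auto
qed

text \<open>Induction on the stage shows that s'
  survives every stage below the count c of s at level v; at stage c this is contradictory.\<close>
lemma lex_min_count_optimal:
  assumes s: "s \<in> lex_min f n" and s': "s' \<in> profiles"
    and le: "\<And>u. v \<le> u \<Longrightarrow> count_at_least n (cost_c f s') u \<le> count_at_least n (cost_c f s) u"
    and lt: "count_at_least n (cost_c f s') v < count_at_least n (cost_c f s) v"
  shows False
proof -
  define c where "c = count_at_least n (cost_c f s) v"
  have c: "1 \<le> c" "c \<le> n" using lt count_at_least_le unfolding c_def by auto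
  have s_stage: "s \<in> lex_min f q" if "q \<le> c" for q
    using lex_min_antimono[of q n f] s that c(2) by auto
  have s_large: "v \<le> qth_largest n q (cost_c f s)" if "1 \<le> q" "q \<le> c" for q
    using qth_largest_ge[of q n "cost_c f s" v] that c_def by simp
  have survives: "q < c \<longrightarrow> s' \<in> lex_min f q" for q
  proof (induction q)
    case (Suc q)
    show ?case
    proof
      assume q: "Suc q < c"
      then have s'q: "s' \<in> lex_min f q" using Suc by simp
      have "qth_largest n (Suc q) (cost_c f s) \<le> qth_largest n (Suc q) (cost_c f s')"
        using s_stage[of "Suc q"] s'q q by auto
      then have "v \<le> qth_largest n (Suc q) (cost_c f s')"
        using s_large[of "Suc q"] q by simp
      then have "qth_largest n (Suc q) (cost_c f s') \<le> qth_largest n (Suc q) (cost_c f s)"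
        using qth_largest_mono[of "Suc q" n v] le q c by simp
      then show "s' \<in> lex_min f (Suc q)" using s_stage[of "Suc q"] s'q q by auto
    qed
  qed (use s' in simp)
  obtain p where p: "c = Suc p" using c(1) by (cases c) auto
  have "qth_largest n c (cost_c f s) \<le> qth_largest n c (cost_c f s')"
    using survives[of p] s_stage[of c] p by auto
  moreover have "qth_largest n c (cost_c f s') < v"
    using qth_largest_less[OF c(2)] lt c_def by simp
  ultimately show False using s_large[of c] c by simp
qed

lemma lex_min_unimprovable:
  assumes "s \<in> lex_min f n" "s' \<in> profiles"
    and no_raise: "\<And>b. b \<in> {1..n} \<Longrightarrow> v \<le> cost_c f s' b \<Longrightarrow> cost_c f s' b \<le> cost_c f s b"
    and "l \<in> {1..n}" "v \<le> cost_c f s l" "cost_c f s' l < v"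
  shows False
proof (rule lex_min_count_optimal[OF assms(1,2)])
  fix u assume "v \<le> u"
  then show "count_at_least n (cost_c f s') u \<le> count_at_least n (cost_c f s) u"
    using no_raise by (intro count_at_least_mono) (meson order_trans)
next
  show "count_at_least n (cost_c f s') v < count_at_least n (cost_c f s) v"
    using no_raise assms(4-6) by (intro count_at_least_strict_mono) (auto intro: order_trans)
qed

lemma nash_profile: "nash_eq n k f R w s \<Longrightarrow> s \<in> profiles"
  unfolding nash_eq_def profiles_def by blast

lemma nash_cost_le:
  "nash_eq n k f R w s \<Longrightarrow> i \<in> {1..k} \<Longrightarrow> l \<in> {1..n} \<Longrightarrow> 0 < s i l \<Longrightarrow> j \<in> R i
   \<Longrightarrow> cost_c f s l \<le> cost_c f s j"
  using cost_c_eq[OF nash_profile] unfolding nash_eq_def by metis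

lemma nashI:
  assumes "s \<in> profiles"
    and "\<And>i l j. i \<in> {1..k} \<Longrightarrow> l \<in> {1..n} \<Longrightarrow> 0 < s i l \<Longrightarrow> j \<in> R i
           \<Longrightarrow> cost_c f s l \<le> cost_c f s j"
  shows "nash_eq n k f R w s"
proof -
  have "\<forall>i\<in>{1..k}. \<forall>l\<in>{1..n}. 0 < s i l \<longrightarrow> (\<forall>j\<in>R i. cost k f R w s l \<le> cost k f R w s j)"
    using assms(2) cost_c_eq[OF assms(1)] by simp
  then show ?thesis using assms(1) unfolding nash_eq_def profiles_def by blast
qed

lemma strong_nashI:
  assumes "nash_eq n k f R w s"
    and "\<And>s'. s' \<in> profiles \<Longrightarrow> s' \<noteq> s \<Longrightarrow>
           (\<And>i l. i \<in> {1..k} \<Longrightarrow> l \<in> {1..n} \<Longrightarrow> s i l < s' i l \<Longrightarrow>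
              cost_c f s' l < type_cost n k f R w s i) \<Longrightarrow> False"
  shows "strong_nash_eq n k f R w s"
proof -
  have False if "consumption_profile n k R s'" "s' \<noteq> s"
    and "\<forall>i\<in>{1..k}. \<forall>l\<in>{1..n}. s i l < s' i l \<longrightarrow> cost k f R w s' l < type_cost n k f R w s i"
    for s'
  proof -
    have s': "s' \<in> profiles" using that(1) unfolding profiles_def by simp
    show False using assms(2)[OF s' that(2)] that(3) cost_c_eq[OF s'] by simp
  qed
  then show ?thesis using assms(1) unfolding strong_nash_eq_def by blast
qed

lemma strong_nashD:
  assumes "strong_nash_eq n k f R w s" "s' \<in> profiles" "s' \<noteq> s"
    and "\<And>i l. i \<in> {1..k} \<Longrightarrow> l \<in> {1..n} \<Longrightarrow> s i l < s' i l \<Longrightarrow>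
           cost_c f s' l < type_cost n k f R w s i"
  shows False
proof -
  have "\<forall>i\<in>{1..k}. \<forall>l\<in>{1..n}. s i l < s' i l \<longrightarrow> cost k f R w s' l < type_cost n k f R w s i"
    using assms(4) cost_c_eq[OF assms(2)] by simp
  then show False using assms(1-3) unfolding strong_nash_eq_def profiles_def by blast
qed

lemma type_cost_used:
  assumes ne: "nash_eq n k f R w s" and i: "i \<in> {1..k}" and l: "l \<in> {1..n}" "0 < s i l"
  shows "type_cost n k f R w s i = cost_c f s l"
proof -
  have s: "s \<in> profiles" using ne by (rule nash_profile)
  define l1 where "l1 = (SOME l. l \<in> {1..n} \<and> 0 < s i l)"
  have "\<exists>l. l \<in> {1..n} \<and> 0 < s i l" using profile_used_resource[OF s i] by blast
  then have l1: "l1 \<in> {1..n}" "0 < s i l1"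
    unfolding l1_def by (metis (mono_tags, lifting) someI_ex)+
  have "l \<in> R i" "l1 \<in> R i" using profile_support[OF s] l(2) l1(2) by (metis less_irrefl)+
  then have "cost_c f s l1 = cost_c f s l"
    using nash_cost_le[OF ne i l1] nash_cost_le[OF ne i l] by (meson order_antisym)
  then show ?thesis unfolding type_cost_def l1_def[symmetric] using cost_c_eq[OF s] by simp
qed

lemma type_cost_le:
  assumes ne: "nash_eq n k f R w s" and i: "i \<in> {1..k}" and j: "j \<in> R i"
  shows "type_cost n k f R w s i \<le> cost_c f s j"
proof -
  obtain l where "l \<in> {1..n}" "0 < s i l"
    using profile_used_resource[OF nash_profile[OF ne] i] by blast
  then show ?thesis using type_cost_used[OF ne i] nash_cost_le[OF ne i _ _ j] by simp
qed

text \<open>Lexicographic minimality turns Nash equilibria into strong ones (only monotonicity of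
  the cost functions is needed): every resource that receives more players under a
  profitable coalitional deviation becomes cheaper, and every other resource has a smaller
  load, so no cost increases and some cost strictly decreases.\<close>
lemma lex_min_nash_strong:
  assumes f_mono: "\<And>j. j \<in> {1..n} \<Longrightarrow> mono_on {0..} (f j)"
    and s_min: "s \<in> lex_min f n" and ne: "nash_eq n k f R w s"
  shows "strong_nash_eq n k f R w s"
proof (rule strong_nashI[OF ne])
  have s: "s \<in> profiles" using ne by (rule nash_profile)
  fix s' assume s': "s' \<in> profiles" "s' \<noteq> s"
    and dev: "\<And>i l. i \<in> {1..k} \<Longrightarrow> l \<in> {1..n} \<Longrightarrow> s i l < s' i l \<Longrightarrow>
                cost_c f s' l < type_cost n k f R w s i"
  have cheaper: "cost_c f s' b < cost_c f s b"
    if a: "a \<in> {1..k}" and b: "b \<in> {1..n}" and more: "s a b < s' a b" for a b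
  proof -
    have "b \<in> R a"
      using profile_support[OF s'(1)] more profile_nonneg[OF s, of a b] by force
    then show ?thesis using dev[OF a b more] type_cost_le[OF ne a] by fastforce
  qed
  have not_dearer: "cost_c f s' b \<le> cost_c f s b" if b: "b \<in> {1..n}" for b
  proof (cases "\<exists>a\<in>{1..k}. s a b < s' a b")
    case True
    then show ?thesis using cheaper b by (meson less_imp_le)
  next
    case False
    then have "load_c s' b \<le> load_c s b"
      by (intro load_c_mono[OF s s'(1)]) (meson not_le)
    then show ?thesis
      unfolding cost_c_def using f_mono[OF b] load_c_nonneg by (meson atLeast_iff mono_onD)
  qed
  obtain a b where a: "a \<in> {1..k}" and b: "b \<in> {1..n}" and more: "s a b < s' a b"
    using profiles_differ_increase[OF s s'] by blast
  show False
    using lex_min_unimprovable[OF s_min s'(1) not_dearer b order_refl cheaper[OF a b more]] .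
qed

end

definition shift_mass :: "(nat \<Rightarrow> nat \<Rightarrow> real) \<Rightarrow> nat \<Rightarrow> nat \<Rightarrow> nat \<Rightarrow> real \<Rightarrow> nat \<Rightarrow> nat \<Rightarrow> real" where
  "shift_mass s i l j e =
     (\<lambda>a b. s a b + e * ((if a = i \<and> b = j then 1 else 0) - (if a = i \<and> b = l then 1 else 0)))"

lemma shift_mass_zero: "shift_mass s i l j 0 = s"
  unfolding shift_mass_def by simp

lemma shift_mass_other: "a \<noteq> i \<or> (b \<noteq> j \<and> b \<noteq> l) \<Longrightarrow> shift_mass s i l j e a b = s a b"
  unfolding shift_mass_def by auto

lemma shift_mass_source: "j \<noteq> l \<Longrightarrow> shift_mass s i l j e i l = s i l - e"
  unfolding shift_mass_def by simp

lemma continuous_shift_mass: "continuous_on UNIV (shift_mass s i l j)"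
  unfolding shift_mass_def by (intro continuous_on_coordinatewise_then_product continuous_intros)

context weighted_game
begin

lemma shift_mass_profile:
  assumes s: "s \<in> profiles" and i: "i \<in> {1..k}" and "l \<in> R i" "j \<in> R i"
    and e: "0 \<le> e" "e \<le> s i l"
  shows "shift_mass s i l j e \<in> profiles"
proof -
  define D where "D a b = e * ((if a = i \<and> b = j then 1 else 0) - (if a = i \<and> b = l then 1 else 0))"
    for a b
  have "shift_mass s i l j e = (\<lambda>a b. s a b + D a b)"
    unfolding shift_mass_def D_def ..
  moreover have "(\<lambda>a b. s a b + D a b) \<in> profiles"
  proof (rule profile_add_direction[OF s])
    fix a b show "D a b \<noteq> 0 \<Longrightarrow> a \<in> {1..k} \<and> b \<in> R a"
      using i assms(3,4) unfolding D_def by (auto split: if_splits)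
  next
    fix a assume "a \<in> {1..k}"
    then show "(\<Sum>b\<in>{1..n}. D a b) = 0"
      using R_sub[OF i] assms(3,4) unfolding D_def
      by (cases "a = i") (simp_all add: sum_distrib_left[symmetric] sum_subtractf)
  next
    fix a b show "0 \<le> s a b + D a b"
      using profile_nonneg[OF s, of a b] e unfolding D_def by auto
  qed
  ultimately show ?thesis by simp
qed

lemma small_shift_stays_below:
  assumes f_cont: "continuous_on {0..} (f j)" and below: "cost_c f s j < c" and "0 < d"
  shows "\<exists>e\<in>{0<..<d}. cost_c f (shift_mass s i l j e) j < c"
proof -
  have "continuous_on UNIV (\<lambda>e. cost_c f (shift_mass s i l j e) j)"
    using continuous_on_compose2[OF continuous_cost_c[of f j, OF f_cont] continuous_shift_mass]
    by simp
  from tendsto_continuous_UNIV[OF this tendsto_ident_at[of 0 "{0<..}"]]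
  have "((\<lambda>e. cost_c f (shift_mass s i l j e) j) \<longlongrightarrow> cost_c f s j) (at_right 0)"
    by (simp add: shift_mass_zero)
  then have "eventually (\<lambda>e. cost_c f (shift_mass s i l j e) j < c) (at_right 0)"
    using below by (rule order_tendstoD(2))
  moreover have "eventually (\<lambda>e. e \<in> {0<..<d}) (at_right 0)"
    using eventually_at_right_real[OF \<open>0 < d\<close>] .
  ultimately show ?thesis
    using eventually_happens'[OF trivial_limit_at_right_real eventually_conj] by blast
qed

text \<open>For strictly increasing cost functions a final-stage profile is a Nash equilibrium:
  if type i used l although some available j were cheaper, shifting a little of type i from
  l to j keeps the cost of j below that of l, strictly lowers the cost of l and changes no
  other cost, contradicting lexicographic minimality.\<close>
lemma lex_min_nash:
  assumes f_strict: "\<And>j. j \<in> {1..n} \<Longrightarrow> strict_mono_on {0..} (f j)"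
    and f_cont: "\<And>j. j \<in> {1..n} \<Longrightarrow> continuous_on {0..} (f j)"
    and s_min: "s \<in> lex_min f n"
  shows "nash_eq n k f R w s"
proof -
  have s: "s \<in> profiles" using s_min lex_min_profiles by blast
  have "cost_c f s l \<le> cost_c f s j"
    if i: "i \<in> {1..k}" and l: "l \<in> {1..n}" "0 < s i l" and j: "j \<in> R i" for i l j
  proof (rule ccontr)
    assume "\<not> ?thesis"
    then have j_cheaper: "cost_c f s j < cost_c f s l" by simp
    then have "j \<noteq> l" by auto
    have lR: "l \<in> R i" using profile_support[OF s] l(2) by force
    obtain e where e_j: "cost_c f (shift_mass s i l j e) j < cost_c f s l"
      and e: "e \<in> {0<..<s i l}"
      using small_shift_stays_below[OF f_cont[OF R_sub[OF i j]] j_cheaper l(2)] by blast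
    define s' where "s' = shift_mass s i l j e"
    have s': "s' \<in> profiles" unfolding s'_def using shift_mass_profile[OF s i lR j] e by simp
    have unchanged: "cost_c f s' b = cost_c f s b" if "b \<noteq> j" "b \<noteq> l" for b
      unfolding cost_c_def load_c_def s'_def using shift_mass_other that by simp
    have "load_c s' l < load_c s l"
    proof (rule load_c_strict_mono[OF s s' _ i lR])
      show "s' a l \<le> s a l" if "a \<in> {1..k}" "l \<in> R a" for a
        unfolding s'_def using shift_mass_other[of a i l j l s e] shift_mass_source[OF \<open>j \<noteq> l\<close>] e
        by (cases "a = i") auto
      show "s' i l < s i l" unfolding s'_def using shift_mass_source[OF \<open>j \<noteq> l\<close>] e by simp
    qed
    then have l_cheaper: "cost_c f s' l < cost_c f s l"
      unfolding cost_c_def using f_strict[OF l(1)] load_c_nonneg by (simp add: strict_mono_onD)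
    have no_raise: "cost_c f s' b \<le> cost_c f s b"
      if "cost_c f s l \<le> cost_c f s' b" for b
      using that e_j l_cheaper unchanged[of b] unfolding s'_def by fastforce
    show False
      using lex_min_unimprovable[OF s_min s' no_raise l(1) order_refl l_cheaper] by blast
  qed
  then show ?thesis by (rule nashI[OF s])
qed

lemma strong_nash_exists_strict:
  assumes f_strict: "\<And>j. j \<in> {1..n} \<Longrightarrow> strict_mono_on {0..} (f j)"
    and f_cont: "\<And>j. j \<in> {1..n} \<Longrightarrow> continuous_on {0..} (f j)"
  shows "\<exists>s. strong_nash_eq n k f R w s"
proof -
  obtain s where s: "s \<in> lex_min f n" using lex_min_compact_nonempty[of f n] f_cont by blast
  have "nash_eq n k f R w s" by (rule lex_min_nash[OF f_strict f_cont s])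
  with s f_strict show ?thesis
    using lex_min_nash_strong strict_mono_on_imp_mono_on by blast
qed

end

definition perturbed :: "(nat \<Rightarrow> real \<Rightarrow> real) \<Rightarrow> real \<Rightarrow> nat \<Rightarrow> real \<Rightarrow> real" where
  "perturbed f e j x = f j x + e * x"

lemma perturbed_strict_mono:
  assumes "mono_on {0..} (f j)" "0 < e"
  shows "strict_mono_on {0..} (perturbed f e j)"
proof (rule strict_mono_onI)
  fix x y :: real assume "x \<in> {0..}" "y \<in> {0..}" "x < y"
  moreover from this have "f j x \<le> f j y" using assms(1) by (meson mono_onD less_imp_le)
  ultimately show "perturbed f e j x < perturbed f e j y"
    unfolding perturbed_def using assms(2) by (simp add: add_le_less_mono)
qed

lemma perturbed_continuous:
  assumes "continuous_on {0..} (f j)"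
  shows "continuous_on {0..} (perturbed f e j)"
  unfolding perturbed_def
  by (intro continuous_on_add continuous_on_mult continuous_on_const continuous_on_id assms)

definition move_toward ::
    "(nat \<Rightarrow> nat \<Rightarrow> real) \<Rightarrow> (nat \<Rightarrow> nat \<Rightarrow> real) \<Rightarrow> (nat \<Rightarrow> nat \<Rightarrow> real) \<Rightarrow> real \<Rightarrow> nat \<Rightarrow> nat \<Rightarrow> real" where
  "move_toward x s s' \<tau> = (\<lambda>a b. x a b + \<tau> * (s' a b - s a b))"

lemma continuous_move_toward_point: "continuous_on UNIV (\<lambda>x. move_toward x s s' \<tau>)"
  unfolding move_toward_def
  by (intro continuous_on_coordinatewise_then_product continuous_intros continuous_on_entry)

lemma continuous_move_toward_step: "continuous_on UNIV (move_toward x s s')"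
  unfolding move_toward_def by (intro continuous_on_coordinatewise_then_product continuous_intros)

lemma tendsto_entry:
  fixes t :: "'a \<Rightarrow> nat \<Rightarrow> nat \<Rightarrow> real"
  shows "(t \<longlongrightarrow> s) F \<Longrightarrow> ((\<lambda>m. t m a b) \<longlongrightarrow> s a b) F"
  by (rule tendsto_continuous_UNIV[OF continuous_on_entry[of a b]])

context weighted_game
begin

lemma tendsto_perturbed_cost:
  assumes f_cont: "continuous_on {0..} (f j)" and x: "x \<longlonglongrightarrow> y" and e: "e \<longlonglongrightarrow> 0"
  shows "(\<lambda>m. cost_c (perturbed f (e m)) (x m) j) \<longlonglongrightarrow> cost_c f y j"
proof -
  have "(\<lambda>m. cost_c f (x m) j + e m * load_c (x m) j) \<longlonglongrightarrow> cost_c f y j + 0 * load_c y j"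
    by (intro tendsto_intros e tendsto_continuous_UNIV[OF continuous_cost_c[of f j, OF f_cont] x]
        tendsto_continuous_UNIV[OF continuous_load_c x])
  then show ?thesis unfolding cost_c_def perturbed_def by simp
qed

text \<open>Limits of Nash equilibria of the perturbed games are Nash equilibria: the equilibrium
  inequalities are closed conditions, and a resource used in the limit is eventually used.\<close>
lemma limit_nash:
  assumes f_cont: "\<And>j. j \<in> {1..n} \<Longrightarrow> continuous_on {0..} (f j)"
    and ne: "\<And>m. nash_eq n k (perturbed f (e m)) R w (t m)"
    and t: "t \<longlonglongrightarrow> s" and e: "e \<longlonglongrightarrow> 0" and s: "s \<in> profiles"
  shows "nash_eq n k f R w s"
proof -
  have "cost_c f s l \<le> cost_c f s j"
    if i: "i \<in> {1..k}" and l: "l \<in> {1..n}" "0 < s i l" and j: "j \<in> R i" for i l j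
  proof (rule tendsto_le[OF sequentially_bot])
    show "(\<lambda>m. cost_c (perturbed f (e m)) (t m) j) \<longlonglongrightarrow> cost_c f s j"
      "(\<lambda>m. cost_c (perturbed f (e m)) (t m) l) \<longlonglongrightarrow> cost_c f s l"
      using tendsto_perturbed_cost[OF f_cont t e] R_sub[OF i j] l(1) by auto
    have "eventually (\<lambda>m. 0 < t m i l) sequentially"
      using order_tendstoD(1)[OF tendsto_entry[OF t] l(2)] .
    then show "eventually (\<lambda>m. cost_c (perturbed f (e m)) (t m) l
                 \<le> cost_c (perturbed f (e m)) (t m) j) sequentially"
      by eventually_elim (rule nash_cost_le[OF ne i l(1) _ j])
  qed
  then show ?thesis by (rule nashI[OF s])
qed

text \<open>Moving a profile close to s by a fraction \<tau> < 1 of the direction from s to another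
  profile s' keeps it a profile: entries that decrease are near their positive limit.\<close>
lemma eventually_move_toward_profile:
  assumes t: "\<And>m. t m \<in> profiles" "t \<longlonglongrightarrow> s" and s: "s \<in> profiles" and s': "s' \<in> profiles"
    and \<tau>: "0 \<le> \<tau>" "\<tau> < 1"
  shows "eventually (\<lambda>m. move_toward (t m) s s' \<tau> \<in> profiles) sequentially"
proof -
  have entry: "eventually (\<lambda>m. 0 \<le> t m a b + \<tau> * (s' a b - s a b)) sequentially" for a b
  proof (cases "s a b \<le> s' a b")
    case True
    then show ?thesis using profile_nonneg[OF t(1)] \<tau> by (simp add: add_nonneg_nonneg)
  next
    case False
    then have "\<tau> * (s a b - s' a b) < 1 * (s a b - s' a b)"
      using \<tau> by (intro mult_strict_right_mono) auto
    then have "\<tau> * (s a b - s' a b) < s a b"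
      using profile_nonneg[OF s', of a b] by simp
    from order_tendstoD(1)[OF tendsto_entry[OF t(2)] this]
    show ?thesis by eventually_elim (simp add: algebra_simps)
  qed
  have "eventually (\<lambda>m. \<forall>a\<in>{1..k}. \<forall>b\<in>{1..n}. 0 \<le> t m a b + \<tau> * (s' a b - s a b)) sequentially"
    using entry by (intro eventually_ball_finite ballI) auto
  then show ?thesis
  proof eventually_elim
    case (elim m)
    have outside: "s a b = 0" "s' a b = 0" "t m a b = 0" if "\<not> (a \<in> {1..k} \<and> b \<in> {1..n})" for a b
      using that profile_index[OF s] profile_index[OF s'] profile_index[OF t(1)] by blast+
    show ?case unfolding move_toward_def
    proof (rule profile_add_direction[OF t(1)])
      show "\<tau> * (s' a b - s a b) \<noteq> 0 \<Longrightarrow> a \<in> {1..k} \<and> b \<in> R a" for a b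
        using profile_support[OF s, of a b] profile_support[OF s', of a b]
        by (cases "s a b = 0") auto
      show "(\<Sum>b\<in>{1..n}. \<tau> * (s' a b - s a b)) = 0" if "a \<in> {1..k}" for a
        using profile_sum[OF s that] profile_sum[OF s' that]
        by (simp add: sum_distrib_left[symmetric] sum_subtractf)
      show "0 \<le> t m a b + \<tau> * (s' a b - s a b)" for a b
        using elim outside[of a b] by (cases "a \<in> {1..k} \<and> b \<in> {1..n}") auto
    qed
  qed
qed

lemma profitable_fraction:
  assumes f_cont: "\<And>j. j \<in> {1..n} \<Longrightarrow> continuous_on {0..} (f j)"
    and A: "finite A" "snd ` A \<subseteq> {1..n}"
    and profitable: "\<And>a b. (a, b) \<in> A \<Longrightarrow> cost_c f s' b < c a"
  shows "\<exists>\<tau>\<in>{0<..<1}. \<forall>(a, b)\<in>A. cost_c f (move_toward s s s' \<tau>) b < c a"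
proof -
  have "eventually (\<lambda>\<tau>. \<forall>p\<in>A. cost_c f (move_toward s s s' \<tau>) (snd p) < c (fst p)) (at_left 1)"
  proof (intro eventually_ball_finite A(1) ballI)
    fix p assume p: "p \<in> A"
    then have b: "snd p \<in> {1..n}" using A(2) by blast
    have "continuous_on UNIV (\<lambda>\<tau>. cost_c f (move_toward s s s' \<tau>) (snd p))"
      using continuous_on_compose2[OF continuous_cost_c[of f "snd p", OF f_cont[OF b]]
          continuous_move_toward_step] by simp
    from tendsto_continuous_UNIV[OF this tendsto_ident_at[of 1 "{..<1}"]]
    have "((\<lambda>\<tau>. cost_c f (move_toward s s s' \<tau>) (snd p)) \<longlongrightarrow> cost_c f s' (snd p)) (at_left 1)"
      by (simp add: move_toward_def)
    then show "eventually (\<lambda>\<tau>. cost_c f (move_toward s s s' \<tau>) (snd p) < c (fst p)) (at_left 1)"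
      using profitable[of "fst p" "snd p"] p by (simp add: order_tendstoD(2))
  qed
  moreover have "eventually (\<lambda>\<tau>. \<tau> \<in> {0<..<1}) (at_left (1::real))"
    by (rule eventually_at_left_real) simp
  ultimately obtain \<tau> where "\<forall>p\<in>A. cost_c f (move_toward s s s' \<tau>) (snd p) < c (fst p)"
    and "\<tau> \<in> {0<..<1}"
    using eventually_happens'[OF trivial_limit_at_left_real eventually_conj] by blast
  then show ?thesis by (auto simp: split_beta)
qed

lemma eventually_below_type_cost:
  assumes f_cont: "\<And>j. j \<in> {1..n} \<Longrightarrow> continuous_on {0..} (f j)"
    and ne: "\<And>m. nash_eq n k (perturbed f (e m)) R w (t m)"
    and t: "t \<longlonglongrightarrow> s" and e: "e \<longlonglongrightarrow> 0" and x: "x \<longlonglongrightarrow> y"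
    and a: "a \<in> {1..k}" and b: "b \<in> {1..n}" and l: "l \<in> {1..n}" "0 < s a l"
    and below: "cost_c f y b < cost_c f s l"
  shows "eventually (\<lambda>m. cost_c (perturbed f (e m)) (x m) b
                          < type_cost n k (perturbed f (e m)) R w (t m) a) sequentially"
proof -
  have "(\<lambda>m. cost_c (perturbed f (e m)) (t m) l - cost_c (perturbed f (e m)) (x m) b)
          \<longlonglongrightarrow> cost_c f s l - cost_c f y b"
    by (intro tendsto_diff tendsto_perturbed_cost f_cont t e x b l(1))
  then have "eventually (\<lambda>m. cost_c (perturbed f (e m)) (x m) b
                              < cost_c (perturbed f (e m)) (t m) l) sequentially"
    using below by (auto dest: order_tendstoD(1)[where a=0] elim: eventually_mono)
  moreover have "eventually (\<lambda>m. 0 < t m a l) sequentially"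
    using order_tendstoD(1)[OF tendsto_entry[OF t] l(2)] .
  ultimately show ?thesis
    by eventually_elim (simp add: type_cost_used[OF ne a l(1)])
qed

text \<open>A profitable coalitional deviation from the limit s to s' yields a profitable
  deviation from some nearby equilibrium t m of a perturbed game: move t m by a suitable
  fraction \<tau> < 1 of the direction from s to s'.\<close>
lemma deviation_transfers:
  assumes f_cont: "\<And>j. j \<in> {1..n} \<Longrightarrow> continuous_on {0..} (f j)"
    and ne_t: "\<And>m. nash_eq n k (perturbed f (e m)) R w (t m)"
    and t: "t \<longlonglongrightarrow> s" and e: "e \<longlonglongrightarrow> 0" and ne: "nash_eq n k f R w s"
    and s': "s' \<in> profiles" "s' \<noteq> s"
    and dev: "\<And>a b. a \<in> {1..k} \<Longrightarrow> b \<in> {1..n} \<Longrightarrow> s a b < s' a b \<Longrightarrow>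
                cost_c f s' b < type_cost n k f R w s a"
  shows "\<exists>m. \<exists>x\<in>profiles. x \<noteq> t m \<and> (\<forall>i\<in>{1..k}. \<forall>l\<in>{1..n}. t m i l < x i l \<longrightarrow>
           cost_c (perturbed f (e m)) x l < type_cost n k (perturbed f (e m)) R w (t m) i)"
proof -
  have s: "s \<in> profiles" using ne by (rule nash_profile)
  have t_prof: "t m \<in> profiles" for m using ne_t nash_profile by blast
  obtain used where used: "\<And>a. a \<in> {1..k} \<Longrightarrow> used a \<in> {1..n}"
      "\<And>a. a \<in> {1..k} \<Longrightarrow> 0 < s a (used a)"
    using profile_used_resource[OF s] by metis
  define A where "A = {(a, b). a \<in> {1..k} \<and> b \<in> {1..n} \<and> s a b < s' a b}"
  have A: "finite A" "snd ` A \<subseteq> {1..n}"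
    unfolding A_def by (auto intro: finite_subset[of _ "{1..k} \<times> {1..n}"])
  have "cost_c f s' b < cost_c f s (used a)" if "(a, b) \<in> A" for a b
  proof -
    from that have a: "a \<in> {1..k}" and b: "b \<in> {1..n}" and more: "s a b < s' a b"
      unfolding A_def by auto
    show ?thesis using dev[OF a b more] type_cost_used[OF ne a used(1,2)[OF a]] by simp
  qed
  then obtain \<tau> where \<tau>: "\<tau> \<in> {0<..<1}"
    and cheap: "\<forall>(a, b)\<in>A. cost_c f (move_toward s s s' \<tau>) b < cost_c f s (used a)"
    using profitable_fraction[of f A s' "\<lambda>a. cost_c f s (used a)" s] f_cont A by blast
  define x where "x m = move_toward (t m) s s' \<tau>" for m
  have x: "x \<longlonglongrightarrow> move_toward s s s' \<tau>"
    unfolding x_def by (rule tendsto_continuous_UNIV[OF continuous_move_toward_point t])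
  have "eventually (\<lambda>m. x m \<in> profiles) sequentially"
    unfolding x_def using eventually_move_toward_profile[OF t_prof t s s'(1)] \<tau> by simp
  moreover have "eventually (\<lambda>m. \<forall>(a, b)\<in>A. cost_c (perturbed f (e m)) (x m) b
                    < type_cost n k (perturbed f (e m)) R w (t m) a) sequentially"
  proof (intro eventually_ball_finite A(1) ballI)
    fix p assume "p \<in> A"
    then obtain a b where p: "p = (a, b)" "(a, b) \<in> A" and a: "a \<in> {1..k}" and b: "b \<in> {1..n}"
      unfolding A_def by auto
    show "eventually (\<lambda>m. case p of (a, b) \<Rightarrow> cost_c (perturbed f (e m)) (x m) b
              < type_cost n k (perturbed f (e m)) R w (t m) a) sequentially"
      using eventually_below_type_cost[OF f_cont ne_t t e x a b used(1,2)[OF a]] cheap p by auto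
  qed
  ultimately obtain m where x_prof: "x m \<in> profiles"
    and x_cheap: "\<forall>(a, b)\<in>A. cost_c (perturbed f (e m)) (x m) b
                    < type_cost n k (perturbed f (e m)) R w (t m) a"
    using eventually_happens'[OF sequentially_bot eventually_conj] by blast
  have "x m \<noteq> t m"
    using s'(2) \<tau> unfolding x_def move_toward_def by (auto simp: fun_eq_iff)
  moreover have "cost_c (perturbed f (e m)) (x m) l < type_cost n k (perturbed f (e m)) R w (t m) i"
    if "i \<in> {1..k}" "l \<in> {1..n}" "t m i l < x m i l" for i l
  proof -
    have "s i l < s' i l"
      using that(3) \<tau> unfolding x_def move_toward_def by (simp add: zero_less_mult_iff)
    then show ?thesis using x_cheap that(1,2) unfolding A_def by fastforce
  qed
  ultimately show ?thesis using x_prof by blast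
qed

lemma limit_strong:
  assumes f_cont: "\<And>j. j \<in> {1..n} \<Longrightarrow> continuous_on {0..} (f j)"
    and strong: "\<And>m. strong_nash_eq n k (perturbed f (e m)) R w (t m)"
    and t: "t \<longlonglongrightarrow> s" and e: "e \<longlonglongrightarrow> 0" and s: "s \<in> profiles"
  shows "strong_nash_eq n k f R w s"
proof -
  have ne_t: "nash_eq n k (perturbed f (e m)) R w (t m)" for m
    using strong unfolding strong_nash_eq_def by blast
  have ne: "nash_eq n k f R w s" by (rule limit_nash[OF f_cont ne_t t e s])
  show ?thesis
  proof (rule strong_nashI[OF ne])
    fix s' assume "s' \<in> profiles" "s' \<noteq> s"
      "\<And>i l. i \<in> {1..k} \<Longrightarrow> l \<in> {1..n} \<Longrightarrow> s i l < s' i l \<Longrightarrow>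
         cost_c f s' l < type_cost n k f R w s i"
    then obtain m x where "x \<in> profiles" "x \<noteq> t m"
      "\<And>i l. i \<in> {1..k} \<Longrightarrow> l \<in> {1..n} \<Longrightarrow> t m i l < x i l \<Longrightarrow>
         cost_c (perturbed f (e m)) x l < type_cost n k (perturbed f (e m)) R w (t m) i"
      using deviation_transfers[OF f_cont ne_t t e ne] by blast
    then show False by (rule strong_nashD[OF strong])
  qed
qed

lemma strong_nash_exists:
  assumes f_mono: "\<And>j. j \<in> {1..n} \<Longrightarrow> mono_on {0..} (f j)"
    and f_cont: "\<And>j. j \<in> {1..n} \<Longrightarrow> continuous_on {0..} (f j)"
  shows "\<exists>s. strong_nash_eq n k f R w s"
proof -
  define e where "e m = inverse (real (Suc m))" for m
  have "\<exists>s. strong_nash_eq n k (perturbed f (e m)) R w s" for m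
    using strong_nash_exists_strict[of "perturbed f (e m)"]
      perturbed_strict_mono[OF f_mono] perturbed_continuous[OF f_cont] by (simp add: e_def)
  then obtain t where t: "\<And>m. strong_nash_eq n k (perturbed f (e m)) R w (t m)" by metis
  then have "t m \<in> profiles" for m
    unfolding strong_nash_eq_def using nash_profile by blast
  then obtain s r where s: "s \<in> profiles" and r: "strict_mono r" and lim: "(t \<circ> r) \<longlonglongrightarrow> s"
    using compact_imp_seq_compact[OF profiles_compact] unfolding seq_compact_def by metis
  have "(e \<circ> r) \<longlonglongrightarrow> 0"
    using LIMSEQ_subseq_LIMSEQ[OF LIMSEQ_inverse_real_of_nat r] unfolding e_def comp_def .
  with lim s t f_cont show ?thesis
    using limit_strong[of f "e \<circ> r" "t \<circ> r" s] by auto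
qed

end

theorem mainTheorem5:
  fixes n k :: nat and f :: "nat \<Rightarrow> real \<Rightarrow> real" and R :: "nat \<Rightarrow> nat set"
    and w :: "nat \<Rightarrow> nat \<Rightarrow> real \<Rightarrow> real"
  assumes "rsg_game n k f R w"
    and "\<forall>j\<in>{1..n}. continuous_on {0..} (f j)"
    and "\<forall>i\<in>{1..k}. \<forall>j\<in>R i. continuous_on {0..1} (w i j)"
  shows "\<exists>s. strong_nash_eq n k f R w s"
proof -
  interpret weighted_game n k R w
    using assms(1,3) unfolding rsg_game_def by unfold_locales blast+
  show ?thesis
    using strong_nash_exists assms(1,2) unfolding rsg_game_def by blast
qed

end
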